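(* Let $(\mathcal G,\lambda)$ be a small morphism-colored groupoid satisfying the inverse-compatibility condition, and let $I_1$ be the image of $\lambda$. Then the relation $\overset{1}{\sim}$ on $I_1$ is an equivalence relation.
   Context: A morphism-colored category is a pair $(\mathcal C,\lambda)$ where $\mathcal C$ is a category and $\lambda$ assigns to each morphism $f$ a color $\lambda(f)$, such that: whenever $g,f_1,f_2$ with $(f_1,f_2)$ composable satisfy $\lambda(g)=\lambda(f_1\circ f_2)$, there exist composable $g_1,g_2$ with $g=g_1\circ g_2$, $\lambda(g_1)=\lambda(f_1)$, $\lambda(g_2)=\lambda(f_2)$. It is a morphism-colored groupoid if $\mathcal C$ is a groupoid, and small if $\mathcal C$ is small and $\lambda$ is a map into a set. Inverse-compatibility: $\lambda(f)=\lambda(g)$ implies $\lambda(f^{-1})=\lambda(g^{-1})$. The relation $\overset{1}{\sim}$ on $I_1=\lambda(\mathrm{Mor}(\mathcal G))$: for every $l\ge1$ and every pair of composable sequences $(f_1,\dots,f_l)$, $(g_1,\dots,g_l)$ of morphisms of $\mathcal G$ with $\lambda(f_i)=\lambda(g_i)$ for $i=1,\dots,l$, declare $\lambda(f_1\circ\cdots\circ f_l)\overset{1}{\sim}\lambda(g_1\circ\cdots\circ g_l)$; no other pairs are related. *)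

theory Defs
  imports Main
begin

text \<open>Convention: Comp C g f is
  g composed after f, defined (composable pair (g,f)) when Dom g = Cod f.\<close>

record ('o, 'm) cat =
  Obj :: "'o set"
  Mor :: "'m set"
  Dom :: "'m \<Rightarrow> 'o"
  Cod :: "'m \<Rightarrow> 'o"
  Comp :: "'m \<Rightarrow> 'm \<Rightarrow> 'm"
  Ident :: "'o \<Rightarrow> 'm"

definition category :: "('o, 'm) cat \<Rightarrow> bool" where
  "category C \<longleftrightarrow>
     (\<forall>f\<in>Mor C. Dom C f \<in> Obj C \<and> Cod C f \<in> Obj C) \<and>
     (\<forall>f\<in>Mor C. \<forall>g\<in>Mor C. Dom C g = Cod C f \<longrightarrow>
        Comp C g f \<in> Mor C \<and> Dom C (Comp C g f) = Dom C f \<and> Cod C (Comp C g f) = Cod C g) \<and>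
     (\<forall>a\<in>Obj C. Ident C a \<in> Mor C \<and> Dom C (Ident C a) = a \<and> Cod C (Ident C a) = a) \<and>
     (\<forall>f\<in>Mor C. Comp C f (Ident C (Dom C f)) = f \<and> Comp C (Ident C (Cod C f)) f = f) \<and>
     (\<forall>f\<in>Mor C. \<forall>g\<in>Mor C. \<forall>h\<in>Mor C. Dom C h = Cod C g \<longrightarrow> Dom C g = Cod C f \<longrightarrow>
        Comp C h (Comp C g f) = Comp C (Comp C h g) f)"

definition is_inverse :: "('o, 'm) cat \<Rightarrow> 'm \<Rightarrow> 'm \<Rightarrow> bool" where
  "is_inverse C f g \<longleftrightarrow> g \<in> Mor C \<and> Dom C g = Cod C f \<and> Cod C g = Dom C f \<and>
     Comp C g f = Ident C (Dom C f) \<and> Comp C f g = Ident C (Cod C f)"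

definition groupoid :: "('o, 'm) cat \<Rightarrow> bool" where
  "groupoid C \<longleftrightarrow> category C \<and> (\<forall>f\<in>Mor C. \<exists>g. is_inverse C f g)"

definition morphism_colored :: "('o, 'm) cat \<Rightarrow> ('m \<Rightarrow> 'c) \<Rightarrow> bool" where
  "morphism_colored C col \<longleftrightarrow>
     (\<forall>g\<in>Mor C. \<forall>f1\<in>Mor C. \<forall>f2\<in>Mor C. Dom C f1 = Cod C f2 \<longrightarrow> col g = col (Comp C f1 f2) \<longrightarrow>
        (\<exists>g1\<in>Mor C. \<exists>g2\<in>Mor C. Dom C g1 = Cod C g2 \<and> g = Comp C g1 g2 \<and>
            col g1 = col f1 \<and> col g2 = col f2))"

definition inverse_compatible :: "('o, 'm) cat \<Rightarrow> ('m \<Rightarrow> 'c) \<Rightarrow> bool" where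
  "inverse_compatible C col \<longleftrightarrow>
     (\<forall>f\<in>Mor C. \<forall>g\<in>Mor C. \<forall>f' g'. is_inverse C f f' \<longrightarrow> is_inverse C g g' \<longrightarrow>
        col f = col g \<longrightarrow> col f' = col g')"

definition composable_seq :: "('o, 'm) cat \<Rightarrow> 'm list \<Rightarrow> bool" where
  "composable_seq C fs \<longleftrightarrow> fs \<noteq> [] \<and> set fs \<subseteq> Mor C \<and>
     (\<forall>i. Suc i < length fs \<longrightarrow> Dom C (fs ! i) = Cod C (fs ! Suc i))"

text \<open>f_1 \<circ> ... \<circ> f_l (right-nested; bracketing is irrelevant by associativity).\<close>
fun comp_list :: "('o, 'm) cat \<Rightarrow> 'm list \<Rightarrow> 'm" where
  "comp_list C [] = undefined"
| "comp_list C [f] = f"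
| "comp_list C (f # g # fs) = Comp C f (comp_list C (g # fs))"

definition sim1 :: "('o, 'm) cat \<Rightarrow> ('m \<Rightarrow> 'c) \<Rightarrow> 'c \<Rightarrow> 'c \<Rightarrow> bool" where
  "sim1 C col a b \<longleftrightarrow>
     (\<exists>fs gs. composable_seq C fs \<and> composable_seq C gs \<and> length fs = length gs \<and>
        (\<forall>i < length fs. col (fs ! i) = col (gs ! i)) \<and>
        a = col (comp_list C fs) \<and> b = col (comp_list C gs))"

end

theory Submission
  imports Defs
begin

text \<open>Say that a morphism \<open>m\<close> factors as a word \<open>w\<close> of colors if \<open>m\<close> is the composite of a
  composable sequence colored by \<open>w\<close>; then \<open>a \<sim>\<^sub>1 b\<close> means that some word factors a morphism of
  color \<open>a\<close> and one of color \<open>b\<close>. The coloring axiom shows, by induction on the word, that which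
  words factor \<open>m\<close> depends only on the color of \<open>m\<close>. For transitivity, let \<open>s\<close> factor morphisms
  \<open>F\<close>, \<open>G\<close> and \<open>t\<close> factor \<open>H\<close>, \<open>K\<close>, with \<open>col G = col H\<close>. Then \<open>s\<close> also factors \<open>H\<close>, and
  \<open>H\<^sup>-\<^sup>1 \<circ> H\<close> and \<open>H \<circ> H\<^sup>-\<^sup>1\<close> are identities factoring as \<open>[col H\<^sup>-\<^sup>1] @ t\<close> and \<open>s @ [col H\<^sup>-\<^sup>1]\<close>.
  Splitting the last factor of \<open>F\<close> (resp. the first factor of \<open>K\<close>) against such an identity by
  the coloring axiom shows that \<open>s @ [col H\<^sup>-\<^sup>1] @ t\<close> factors both \<open>F\<close> and \<open>K\<close>.\<close>

definition factors_as :: "('o, 'm) cat \<Rightarrow> ('m \<Rightarrow> 'c) \<Rightarrow> 'm \<Rightarrow> 'c list \<Rightarrow> bool" where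
  "factors_as C col m w \<longleftrightarrow> (\<exists>ms. composable_seq C ms \<and> map col ms = w \<and> comp_list C ms = m)"

lemma sim1_iff_common_factorization:
  "sim1 C col a b \<longleftrightarrow>
     (\<exists>w m n. factors_as C col m w \<and> factors_as C col n w \<and> a = col m \<and> b = col n)"
proof
  assume "sim1 C col a b"
  then obtain fs gs where "composable_seq C fs" "composable_seq C gs" "length fs = length gs"
      "\<forall>i < length fs. col (fs ! i) = col (gs ! i)"
      "a = col (comp_list C fs)" "b = col (comp_list C gs)"
    unfolding sim1_def by blast
  moreover from this have "map col fs = map col gs"
    by (simp add: list_eq_iff_nth_eq)
  ultimately show "\<exists>w m n. factors_as C col m w \<and> factors_as C col n w \<and> a = col m \<and> b = col n"
    unfolding factors_as_def by metis
next
  assume "\<exists>w m n. factors_as C col m w \<and> factors_as C col n w \<and> a = col m \<and> b = col n"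
  then obtain fs gs where "composable_seq C fs" "composable_seq C gs" "map col fs = map col gs"
      "a = col (comp_list C fs)" "b = col (comp_list C gs)"
    unfolding factors_as_def by metis
  moreover from this have "length fs = length gs" "\<forall>i < length fs. col (fs ! i) = col (gs ! i)"
    by (metis length_map, metis length_map nth_map)
  ultimately show "sim1 C col a b"
    unfolding sim1_def by blast
qed

lemma composable_seq_Cons_Cons:
  "composable_seq C (f # g # fs) \<longleftrightarrow>
     f \<in> Mor C \<and> Dom C f = Cod C g \<and> composable_seq C (g # fs)"
  unfolding composable_seq_def by (auto simp: nth_Cons split: nat.splits)

locale small_category =
  fixes C :: "('o, 'm) cat"
  assumes category: "category C"
begin

lemma comp_Mor: "f \<in> Mor C \<Longrightarrow> g \<in> Mor C \<Longrightarrow> Dom C g = Cod C f \<Longrightarrow> Comp C g f \<in> Mor C"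
  and Dom_comp: "f \<in> Mor C \<Longrightarrow> g \<in> Mor C \<Longrightarrow> Dom C g = Cod C f \<Longrightarrow> Dom C (Comp C g f) = Dom C f"
  and Cod_comp: "f \<in> Mor C \<Longrightarrow> g \<in> Mor C \<Longrightarrow> Dom C g = Cod C f \<Longrightarrow> Cod C (Comp C g f) = Cod C g"
  using category unfolding category_def by auto

lemma comp_assoc:
  "f \<in> Mor C \<Longrightarrow> g \<in> Mor C \<Longrightarrow> h \<in> Mor C \<Longrightarrow> Dom C h = Cod C g \<Longrightarrow> Dom C g = Cod C f \<Longrightarrow>
     Comp C h (Comp C g f) = Comp C (Comp C h g) f"
  using category unfolding category_def by blast

lemma Ident_Mor: "f \<in> Mor C \<Longrightarrow> Ident C (Dom C f) \<in> Mor C" "f \<in> Mor C \<Longrightarrow> Ident C (Cod C f) \<in> Mor C"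
  and Dom_Ident: "f \<in> Mor C \<Longrightarrow> Dom C (Ident C (Cod C f)) = Cod C f"
  and Cod_Ident: "f \<in> Mor C \<Longrightarrow> Cod C (Ident C (Dom C f)) = Dom C f"
  and comp_Ident_right: "f \<in> Mor C \<Longrightarrow> Comp C f (Ident C (Dom C f)) = f"
  and comp_Ident_left: "f \<in> Mor C \<Longrightarrow> Comp C (Ident C (Cod C f)) f = f"
  using category unfolding category_def by auto

lemma comp_list_Mor_Cod:
  "composable_seq C fs \<Longrightarrow> comp_list C fs \<in> Mor C \<and> Cod C (comp_list C fs) = Cod C (hd fs)"
proof (induction fs rule: induct_list012)
  case (3 f g fs)
  then show ?case
    by (auto simp: composable_seq_Cons_Cons comp_Mor Cod_comp)
qed (auto simp: composable_seq_def)

end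

locale morphism_colored_category = small_category C for C :: "('o, 'm) cat" +
  fixes col :: "'m \<Rightarrow> 'c"
  assumes colored: "morphism_colored C col"
begin

abbreviation factors :: "'m \<Rightarrow> 'c list \<Rightarrow> bool" where
  "factors \<equiv> factors_as C col"

lemma color_split:
  assumes "g \<in> Mor C" "f1 \<in> Mor C" "f2 \<in> Mor C" "Dom C f1 = Cod C f2" "col g = col (Comp C f1 f2)"
  obtains g1 g2 where "g1 \<in> Mor C" "g2 \<in> Mor C" "Dom C g1 = Cod C g2" "g = Comp C g1 g2"
    "col g1 = col f1" "col g2 = col f2"
  using colored assms unfolding morphism_colored_def by metis

lemma factors_nonempty: "factors m w \<Longrightarrow> w \<noteq> []"
  unfolding factors_as_def composable_seq_def by auto

lemma factors_singleton_iff: "factors m [x] \<longleftrightarrow> m \<in> Mor C \<and> col m = x"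
  unfolding factors_as_def composable_seq_def by (auto intro!: exI[of _ "[m]"])

lemma factors_Cons_iff:
  assumes "w \<noteq> []"
  shows "factors m (x # w) \<longleftrightarrow>
    (\<exists>a b. a \<in> Mor C \<and> col a = x \<and> factors b w \<and> Dom C a = Cod C b \<and> m = Comp C a b)"
proof
  assume "factors m (x # w)"
  then obtain a ms where a: "composable_seq C (a # ms)" "col a = x" "map col ms = w"
      "comp_list C (a # ms) = m"
    unfolding factors_as_def by (auto simp: map_eq_Cons_conv)
  obtain g gs where "ms = g # gs"
    using assms a(3) by (cases ms) auto
  with a have "a \<in> Mor C" "composable_seq C ms" "Dom C a = Cod C (comp_list C ms)"
      "m = Comp C a (comp_list C ms)"
    by (auto simp: composable_seq_Cons_Cons comp_list_Mor_Cod)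
  with a(2,3) show "\<exists>a b. a \<in> Mor C \<and> col a = x \<and> factors b w \<and> Dom C a = Cod C b \<and> m = Comp C a b"
    unfolding factors_as_def by blast
next
  assume "\<exists>a b. a \<in> Mor C \<and> col a = x \<and> factors b w \<and> Dom C a = Cod C b \<and> m = Comp C a b"
  then obtain a g gs where "a \<in> Mor C" "col a = x" "composable_seq C (g # gs)"
      "map col (g # gs) = w" "Dom C a = Cod C (comp_list C (g # gs))"
      "m = Comp C a (comp_list C (g # gs))"
    unfolding factors_as_def by (metis composable_seq_def neq_Nil_conv)
  then show "factors m (x # w)"
    unfolding factors_as_def
    by (auto simp: composable_seq_Cons_Cons comp_list_Mor_Cod intro!: exI[of _ "a # g # gs"])
qed

lemma factors_Mor: "factors m w \<Longrightarrow> m \<in> Mor C"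
  unfolding factors_as_def using comp_list_Mor_Cod by blast

lemma factors_append:
  "factors a s \<Longrightarrow> factors b t \<Longrightarrow> Dom C a = Cod C b \<Longrightarrow> factors (Comp C a b) (s @ t)"
proof (induction s arbitrary: a)
  case Nil
  then show ?case
    using factors_nonempty by blast
next
  case (Cons x s)
  have "t \<noteq> []"
    using Cons.prems(2) factors_nonempty by blast
  show ?case
  proof (cases "s = []")
    case True
    with Cons.prems have "a \<in> Mor C" "col a = x" "factors b t" "Dom C a = Cod C b"
      by (simp_all add: factors_singleton_iff)
    with True \<open>t \<noteq> []\<close> show ?thesis
      by (auto simp: factors_Cons_iff)
  next
    case False
    then obtain a1 a' where a: "a1 \<in> Mor C" "col a1 = x" "factors a' s" "Dom C a1 = Cod C a'"
        "a = Comp C a1 a'"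
      using Cons.prems(1) factors_Cons_iff by blast
    have "a' \<in> Mor C" "b \<in> Mor C"
      using a(3) Cons.prems(2) factors_Mor by auto
    with a Cons.prems(3) have "Dom C a' = Cod C b" "Cod C (Comp C a' b) = Dom C a1"
        and assoc: "Comp C a b = Comp C a1 (Comp C a' b)"
      by (simp_all add: Dom_comp Cod_comp comp_assoc)
    moreover from this(1) have "factors (Comp C a' b) (s @ t)"
      using Cons.IH a(3) Cons.prems(2) by blast
    moreover have "s @ t \<noteq> []"
      using False by simp
    ultimately show ?thesis
      unfolding append_Cons factors_Cons_iff[OF \<open>s @ t \<noteq> []\<close>] using a(1,2) by metis
  qed
qed

lemma factors_color_invariant:
  "factors n w \<Longrightarrow> m \<in> Mor C \<Longrightarrow> col m = col n \<Longrightarrow> factors m w"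
proof (induction w arbitrary: m n)
  case Nil
  then show ?case
    using factors_nonempty by blast
next
  case (Cons x w)
  show ?case
  proof (cases "w = []")
    case True
    with Cons.prems show ?thesis
      by (simp add: factors_singleton_iff)
  next
    case False
    then obtain a b where ab: "a \<in> Mor C" "col a = x" "factors b w" "Dom C a = Cod C b"
        "n = Comp C a b"
      using Cons.prems(1) factors_Cons_iff by blast
    with Cons.prems(2,3) obtain g1 g2 where g: "g1 \<in> Mor C" "g2 \<in> Mor C"
        "Dom C g1 = Cod C g2" "m = Comp C g1 g2" "col g1 = col a" "col g2 = col b"
      by (metis color_split factors_Mor)
    with ab(3) have "factors g2 w"
      using Cons.IH by blast
    with g ab(2) False show ?thesis
      using factors_Cons_iff by metis
  qed
qed

lemma factors_extend_right_letter:
  assumes "m \<in> Mor C" "n \<in> Mor C" "col m = col n" "factors (Ident C (Dom C n)) v"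
  shows "factors m (col m # v)"
proof -
  have "col m = col (Comp C n (Ident C (Dom C n)))"
    using assms(2,3) comp_Ident_right by simp
  then obtain g1 g2 where g: "g1 \<in> Mor C" "g2 \<in> Mor C" "Dom C g1 = Cod C g2" "m = Comp C g1 g2"
      "col g1 = col n" "col g2 = col (Ident C (Dom C n))"
    using assms(1,2) Ident_Mor(1) Cod_Ident by (metis color_split)
  then have "factors g1 [col m]" "factors g2 v"
    using assms factors_singleton_iff factors_color_invariant by auto
  from factors_append[OF this g(3)] g(4) show ?thesis
    by simp
qed

lemma factors_extend_left_letter:
  assumes "m \<in> Mor C" "n \<in> Mor C" "col m = col n" "factors (Ident C (Cod C n)) v"
  shows "factors m (v @ [col m])"
proof -
  have "col m = col (Comp C (Ident C (Cod C n)) n)"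
    using assms(2,3) comp_Ident_left by simp
  then obtain g1 g2 where g: "g1 \<in> Mor C" "g2 \<in> Mor C" "Dom C g1 = Cod C g2" "m = Comp C g1 g2"
      "col g1 = col (Ident C (Cod C n))" "col g2 = col n"
    using assms(1,2) Ident_Mor(2) Dom_Ident by (metis color_split)
  then have "factors g1 v" "factors g2 [col m]"
    using assms factors_singleton_iff factors_color_invariant by auto
  from factors_append[OF this g(3)] g(4) show ?thesis
    by simp
qed

lemma factors_extend_right:
  "factors m s \<Longrightarrow> factors n s \<Longrightarrow> factors (Ident C (Dom C n)) v \<Longrightarrow> factors m (s @ v)"
proof (induction s arbitrary: m n)
  case Nil
  then show ?case
    using factors_nonempty by blast
next
  case (Cons x s)
  show ?case
  proof (cases "s = []")
    case True
    with Cons.prems(1,2) have "m \<in> Mor C" "n \<in> Mor C" "col m = col n" "x = col m"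
      by (auto simp: factors_singleton_iff)
    with True Cons.prems(3) show ?thesis
      using factors_extend_right_letter by simp
  next
    case False
    obtain a b where ab: "a \<in> Mor C" "col a = x" "factors b s" "Dom C a = Cod C b"
        "m = Comp C a b"
      using False Cons.prems(1) factors_Cons_iff by blast
    obtain a0 b0 where a0b0: "a0 \<in> Mor C" "factors b0 s" "Dom C a0 = Cod C b0" "n = Comp C a0 b0"
      using False Cons.prems(2) factors_Cons_iff by blast
    have "Dom C n = Dom C b0"
      using a0b0 factors_Mor Dom_comp by simp
    with Cons.IH ab(3) a0b0(2) Cons.prems(3) have "factors b (s @ v)"
      by simp
    moreover have "factors a [x]"
      using ab(1,2) by (simp add: factors_singleton_iff)
    ultimately show ?thesis
      using factors_append ab(4,5) by fastforce
  qed
qed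

lemma factors_extend_left:
  assumes "factors m t" "factors n t" "factors (Ident C (Cod C n)) v"
  shows "factors m (v @ t)"
proof -
  obtain x t' where t: "t = x # t'"
    using assms(1) factors_nonempty by (cases t) auto
  show ?thesis
  proof (cases "t' = []")
    case True
    with assms(1,2) t have "m \<in> Mor C" "n \<in> Mor C" "col m = col n" "t = [col m]"
      by (auto simp: factors_singleton_iff)
    with assms(3) show ?thesis
      using factors_extend_left_letter by simp
  next
    case False
    obtain a b where ab: "a \<in> Mor C" "col a = x" "factors b t'" "Dom C a = Cod C b" "m = Comp C a b"
      using False assms(1) t factors_Cons_iff by blast
    obtain a0 b0 where a0b0: "a0 \<in> Mor C" "col a0 = x" "factors b0 t'" "Dom C a0 = Cod C b0"
        "n = Comp C a0 b0"
      using False assms(2) t factors_Cons_iff by blast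
    have "Cod C n = Cod C a0"
      using a0b0 factors_Mor Cod_comp by simp
    with ab a0b0 assms(3) have "factors a (v @ [x])"
      using factors_extend_left_letter by metis
    from factors_append[OF this ab(3,4)] ab(5) t show ?thesis
      by simp
  qed
qed

lemma sim1_refl:
  assumes "m \<in> Mor C"
  shows "sim1 C col (col m) (col m)"
proof -
  have "factors m [col m]"
    using assms by (simp add: factors_singleton_iff)
  then show ?thesis
    unfolding sim1_iff_common_factorization by blast
qed

lemma sim1_colors: "sim1 C col a b \<Longrightarrow> a \<in> col ` Mor C \<and> b \<in> col ` Mor C"
  unfolding sim1_iff_common_factorization using factors_Mor by blast

end

lemma sim1_sym: "sim1 C col a b \<Longrightarrow> sim1 C col b a"
  unfolding sim1_iff_common_factorization by blast

locale morphism_colored_groupoid = morphism_colored_category +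
  assumes invertible: "f \<in> Mor C \<Longrightarrow> \<exists>g. is_inverse C f g"
begin

lemma sim1_trans:
  assumes "sim1 C col a b" "sim1 C col b c"
  shows "sim1 C col a c"
proof -
  obtain s F G where s: "factors F s" "factors G s" "a = col F" "b = col G"
    using assms(1) unfolding sim1_iff_common_factorization by blast
  obtain t H K where t: "factors H t" "factors K t" "b = col H" "c = col K"
    using assms(2) unfolding sim1_iff_common_factorization by blast
  have H: "H \<in> Mor C"
    using t(1) by (rule factors_Mor)
  have Hs: "factors H s"
    using factors_color_invariant[OF s(2) H] s(4) t(3) by simp
  obtain Hi where "is_inverse C H Hi"
    using invertible[OF H] by blast
  then have Hi: "factors Hi [col Hi]" "Dom C Hi = Cod C H" "Cod C Hi = Dom C H"
      "Comp C Hi H = Ident C (Dom C H)" "Comp C H Hi = Ident C (Cod C H)"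
    unfolding is_inverse_def by (auto simp: factors_singleton_iff)
  have "factors (Ident C (Dom C H)) ([col Hi] @ t)"
    using factors_append[OF Hi(1) t(1) Hi(2)] Hi(4) by simp
  then have "factors F (s @ [col Hi] @ t)"
    by (rule factors_extend_right[OF s(1) Hs])
  moreover have "factors (Ident C (Cod C H)) (s @ [col Hi])"
    using factors_append[OF Hs Hi(1) Hi(3)[symmetric]] Hi(5) by simp
  then have "factors K ((s @ [col Hi]) @ t)"
    by (rule factors_extend_left[OF t(2) t(1)])
  ultimately show ?thesis
    unfolding sim1_iff_common_factorization using s(3) t(4) by auto
qed

lemma sim1_equiv: "equiv (col ` Mor C) {(a, b). sim1 C col a b}"
proof (rule equivI)
  show "{(a, b). sim1 C col a b} \<subseteq> col ` Mor C \<times> col ` Mor C"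
    using sim1_colors by blast
  show "refl_on (col ` Mor C) {(a, b). sim1 C col a b}"
    unfolding refl_on_def using sim1_refl by blast
  show "sym {(a, b). sim1 C col a b}"
    by (auto simp: sym_def intro: sim1_sym)
  show "trans {(a, b). sim1 C col a b}"
    by (auto simp: trans_def intro: sim1_trans)
qed

end

theorem proposition3p5:
  fixes C :: "('o, 'm) cat" and col :: "'m \<Rightarrow> 'c"
  assumes "groupoid C"
    and "morphism_colored C col"
    and "inverse_compatible C col"
  shows "equiv (col ` Mor C) {(a, b). sim1 C col a b}"
proof -
  interpret morphism_colored_groupoid C col
    using assms(1,2) unfolding groupoid_def
    by unfold_locales auto
  show ?thesis
    by (rule sim1_equiv)
qed

end
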